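(* Logical convergence does not in general imply convergence in the $n$-bisimulation topology: there exist a countable atom set $\Phi$, a finite agent set $I$, a logic $\Lambda$, an $\boldsymbol{\mathcal{L}}_\Lambda$ modal space $\boldsymbol{X}$ in which modal equivalence and bisimilarity coincide, a point $\boldsymbol{x}\in\boldsymbol{X}$ and a sequence $\boldsymbol{x}_1,\boldsymbol{x}_2,\dots$ in $\boldsymbol{X}$ that logically converges to $\boldsymbol{x}$ but does not converge to $\boldsymbol{x}$ in $(\boldsymbol{X},\mathcal{T}_B)$.
   Context: Given a countable set $\Phi$ of atoms and a finite set $I$ of agents, $\mathcal{L}$ is the multi-agent modal language $\varphi::=\top\mid p\mid\neg\varphi\mid\varphi\wedge\varphi\mid\square_i\varphi$. A logic $\Lambda$ is a normal modal logic over $\mathcal{L}$ extending $K$; $\boldsymbol{\varphi}$ is the class of formulas $\Lambda$-equivalent to $\varphi$ and $\boldsymbol{\mathcal{L}}_\Lambda$ the set of such classes. Kripke models have countable nonempty state sets, relations $R_i$ ($i\in I$) and a valuation of $\Phi$; pointed Kripke models $Ms$ are evaluated with standard semantics. For a set $X$ of pointed Kripke models, the $\boldsymbol{\mathcal{L}}_\Lambda$ modal space is $\boldsymbol{X}=\{\boldsymbol{x}:x\in X\}$ with $\boldsymbol{x}=\{y\in X:y\vDash\varphi\text{ iff }x\vDash\varphi\text{ for all }\varphi\in\mathcal{L}\}$. A sequence $\boldsymbol{x}_1,\boldsymbol{x}_2,\dots$ logically converges to $\boldsymbol{x}$ if for every $\varphi$ with $x\vDash\varphi$ there is $N$ with $x_n\vDash\varphi$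 for all $n\ge N$. When modal equivalence and bisimilarity coincide on $X$, the $n$-bisimulation metric is $d_B(\boldsymbol{x},\boldsymbol{y})=0$ if $x$ and $y$ are $n$-bisimilar for all $n\in\mathbb{N}_0$, and $d_B(\boldsymbol{x},\boldsymbol{y})=2^{-n}$ for the least $n$ such that $x,y$ are not $n$-bisimilar; $\mathcal{T}_B$ is the topology it induces. *)

theory Defs
  imports "HOL-Analysis.Analysis"
begin

text \<open>Atoms and agents are natural numbers; the actual atom set Phi (countable,
  being a subset of nat) and agent set I (finite) are parameters.\<close>

datatype fm = Top | Atom nat | Neg fm | Conj fm fm | Box nat fm

fun atoms :: "fm \<Rightarrow> nat set" where
  "atoms Top = {}"
| "atoms (Atom p) = {p}"
| "atoms (Neg a) = atoms a"
| "atoms (Conj a b) = atoms a \<union> atoms b"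
| "atoms (Box i a) = atoms a"

fun agents :: "fm \<Rightarrow> nat set" where
  "agents Top = {}"
| "agents (Atom p) = {}"
| "agents (Neg a) = agents a"
| "agents (Conj a b) = agents a \<union> agents b"
| "agents (Box i a) = insert i (agents a)"

definition lang :: "nat set \<Rightarrow> nat set \<Rightarrow> fm set" where
  "lang Phi I = {a. atoms a \<subseteq> Phi \<and> agents a \<subseteq> I}"

definition imp :: "fm \<Rightarrow> fm \<Rightarrow> fm" where
  "imp a b = Neg (Conj a (Neg b))"

fun peval :: "(fm \<Rightarrow> bool) \<Rightarrow> fm \<Rightarrow> bool" where
  "peval v Top = True"
| "peval v (Atom p) = v (Atom p)"
| "peval v (Neg a) = (\<not> peval v a)"
| "peval v (Conj a b) = (peval v a \<and> peval v b)"
| "peval v (Box i a) = v (Box i a)"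

definition taut :: "fm \<Rightarrow> bool" where
  "taut a = (\<forall>v. peval v a)"

fun subst :: "(nat \<Rightarrow> fm) \<Rightarrow> fm \<Rightarrow> fm" where
  "subst s Top = Top"
| "subst s (Atom p) = s p"
| "subst s (Neg a) = Neg (subst s a)"
| "subst s (Conj a b) = Conj (subst s a) (subst s b)"
| "subst s (Box i a) = Box i (subst s a)"

definition normal_logic :: "nat set \<Rightarrow> nat set \<Rightarrow> fm set \<Rightarrow> bool" where
  "normal_logic Phi I Lam \<longleftrightarrow>
     Lam \<subseteq> lang Phi I
   \<and> (\<forall>a \<in> lang Phi I. taut a \<longrightarrow> a \<in> Lam)
   \<and> (\<forall>i \<in> I. \<forall>a \<in> lang Phi I. \<forall>b \<in> lang Phi I.
        imp (Box i (imp a b)) (imp (Box i a) (Box i b)) \<in> Lam)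
   \<and> (\<forall>a b. a \<in> Lam \<longrightarrow> imp a b \<in> Lam \<longrightarrow> b \<in> Lam)
   \<and> (\<forall>i \<in> I. \<forall>a \<in> Lam. Box i a \<in> Lam)
   \<and> (\<forall>s a. (\<forall>p \<in> Phi. s p \<in> lang Phi I) \<longrightarrow> a \<in> Lam \<longrightarrow> subst s a \<in> Lam)"

text \<open>Kripke models with (countable, as subsets of nat) state sets.\<close>
record kmodel =
  wrld :: "nat set"
  rel :: "nat \<Rightarrow> nat \<Rightarrow> nat \<Rightarrow> bool"
  val :: "nat \<Rightarrow> nat set"

definition kripke :: "kmodel \<Rightarrow> bool" where
  "kripke M \<longleftrightarrow> wrld M \<noteq> {}
     \<and> (\<forall>i s t. rel M i s t \<longrightarrow> s \<in> wrld M \<and> t \<in> wrld M)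
     \<and> (\<forall>p. val M p \<subseteq> wrld M)"

type_synonym pointed = "kmodel \<times> nat"

definition pointed_model :: "pointed \<Rightarrow> bool" where
  "pointed_model x \<longleftrightarrow> kripke (fst x) \<and> snd x \<in> wrld (fst x)"

fun sat :: "kmodel \<Rightarrow> nat \<Rightarrow> fm \<Rightarrow> bool" where
  "sat M s Top = True"
| "sat M s (Atom p) = (s \<in> val M p)"
| "sat M s (Neg a) = (\<not> sat M s a)"
| "sat M s (Conj a b) = (sat M s a \<and> sat M s b)"
| "sat M s (Box i a) = (\<forall>t. rel M i s t \<longrightarrow> sat M t a)"

definition psat :: "pointed \<Rightarrow> fm \<Rightarrow> bool" where
  "psat x a = sat (fst x) (snd x) a"

definition modeq :: "nat set \<Rightarrow> nat set \<Rightarrow> pointed \<Rightarrow> pointed \<Rightarrow> bool" where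
  "modeq Phi I x y \<longleftrightarrow> (\<forall>a \<in> lang Phi I. psat x a \<longleftrightarrow> psat y a)"

definition bisimilar :: "nat set \<Rightarrow> nat set \<Rightarrow> pointed \<Rightarrow> pointed \<Rightarrow> bool" where
  "bisimilar Phi I x y \<longleftrightarrow> (\<exists>Z. Z (snd x) (snd y) \<and>
     (\<forall>u v. Z u v \<longrightarrow>
        u \<in> wrld (fst x) \<and> v \<in> wrld (fst y)
      \<and> (\<forall>p \<in> Phi. u \<in> val (fst x) p \<longleftrightarrow> v \<in> val (fst y) p)
      \<and> (\<forall>i \<in> I. \<forall>u'. rel (fst x) i u u' \<longrightarrow> (\<exists>v'. rel (fst y) i v v' \<and> Z u' v'))
      \<and> (\<forall>i \<in> I. \<forall>v'. rel (fst y) i v v' \<longrightarrow> (\<exists>u'. rel (fst x) i u u' \<and> Z u' v'))))"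

fun nbisim :: "nat set \<Rightarrow> nat set \<Rightarrow> nat \<Rightarrow> kmodel \<Rightarrow> nat \<Rightarrow> kmodel \<Rightarrow> nat \<Rightarrow> bool" where
  "nbisim Phi I 0 M u N v = (\<forall>p \<in> Phi. u \<in> val M p \<longleftrightarrow> v \<in> val N p)"
| "nbisim Phi I (Suc n) M u N v =
     ((\<forall>p \<in> Phi. u \<in> val M p \<longleftrightarrow> v \<in> val N p)
    \<and> (\<forall>i \<in> I. \<forall>u'. rel M i u u' \<longrightarrow> (\<exists>v'. rel N i v v' \<and> nbisim Phi I n M u' N v'))
    \<and> (\<forall>i \<in> I. \<forall>v'. rel N i v v' \<longrightarrow> (\<exists>u'. rel M i u u' \<and> nbisim Phi I n M u' N v')))"

definition pnbisim :: "nat set \<Rightarrow> nat set \<Rightarrow> nat \<Rightarrow> pointed \<Rightarrow> pointed \<Rightarrow> bool" where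
  "pnbisim Phi I n x y = nbisim Phi I n (fst x) (snd x) (fst y) (snd y)"

definition cls :: "nat set \<Rightarrow> nat set \<Rightarrow> pointed set \<Rightarrow> pointed \<Rightarrow> pointed set" where
  "cls Phi I X x = {y \<in> X. modeq Phi I x y}"

definition modal_space :: "nat set \<Rightarrow> nat set \<Rightarrow> pointed set \<Rightarrow> pointed set set" where
  "modal_space Phi I X = cls Phi I X ` X"

definition dB_pt :: "nat set \<Rightarrow> nat set \<Rightarrow> pointed \<Rightarrow> pointed \<Rightarrow> real" where
  "dB_pt Phi I x y = (if \<forall>n. pnbisim Phi I n x y then 0
                      else (1/2) ^ (LEAST n. \<not> pnbisim Phi I n x y))"

definition dB :: "nat set \<Rightarrow> nat set \<Rightarrow> pointed set \<Rightarrow> pointed set \<Rightarrow> real" where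
  "dB Phi I c d = dB_pt Phi I (SOME x. x \<in> c) (SOME y. y \<in> d)"

definition TB :: "nat set \<Rightarrow> nat set \<Rightarrow> pointed set \<Rightarrow> pointed set topology" where
  "TB Phi I X = Metric_space.mtopology (modal_space Phi I X) (dB Phi I)"

definition logically_converges ::
  "nat set \<Rightarrow> nat set \<Rightarrow> (nat \<Rightarrow> pointed) \<Rightarrow> pointed \<Rightarrow> bool" where
  "logically_converges Phi I xs x \<longleftrightarrow>
     (\<forall>a \<in> lang Phi I. psat x a \<longrightarrow> (\<exists>N. \<forall>n \<ge> N. psat (xs n) a))"

end

theory Submission
  imports Defs
begin

text \<open>Without agents every formula is propositional, so modal equivalence, bisimilarity and
  n-bisimilarity all collapse to agreement on the atoms true at the point, and d_B becomes
  the discrete metric. The one-point models in which only the atom n holds converge logically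
  to the one-point model in which no atom holds, since a formula mentions only finitely many
  atoms; yet each of them stays at distance 1 from the limit.\<close>

definition atom_agree :: "nat set \<Rightarrow> pointed \<Rightarrow> pointed \<Rightarrow> bool" where
  "atom_agree Phi x y \<longleftrightarrow> (\<forall>p \<in> Phi. snd x \<in> val (fst x) p \<longleftrightarrow> snd y \<in> val (fst y) p)"

lemma atom_agree_subset: "Q \<subseteq> Phi \<Longrightarrow> atom_agree Phi x y \<Longrightarrow> atom_agree Q x y"
  by (auto simp: atom_agree_def)

lemma finite_atoms: "finite (atoms a)"
  by (induction a) auto

lemma psat_eq_if_atom_agree:
  "agents a = {} \<Longrightarrow> atom_agree (atoms a) x y \<Longrightarrow> psat x a = psat y a"
  by (induction a) (auto simp: psat_def atom_agree_def)

lemma modeq_no_agents_iff: "modeq Phi {} x y \<longleftrightarrow> atom_agree Phi x y"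
proof
  assume "modeq Phi {} x y"
  then have "psat x (Atom p) = psat y (Atom p)" if "p \<in> Phi" for p
    using that unfolding modeq_def lang_def by auto
  then show "atom_agree Phi x y"
    by (simp add: atom_agree_def psat_def)
next
  assume agree: "atom_agree Phi x y"
  show "modeq Phi {} x y"
    unfolding modeq_def
  proof
    fix a assume "a \<in> lang Phi {}"
    then have "agents a = {}" and "atoms a \<subseteq> Phi"
      by (auto simp: lang_def)
    then show "psat x a = psat y a"
      using psat_eq_if_atom_agree atom_agree_subset[OF _ agree] by blast
  qed
qed

lemma pnbisim_no_agents_iff: "pnbisim Phi {} n x y \<longleftrightarrow> atom_agree Phi x y"
  by (cases n) (simp_all add: pnbisim_def atom_agree_def)

lemma bisimilar_no_agents_iff:
  assumes "pointed_model x" "pointed_model y"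
  shows "bisimilar Phi {} x y \<longleftrightarrow> atom_agree Phi x y"
proof
  assume "atom_agree Phi x y"
  then show "bisimilar Phi {} x y"
    unfolding bisimilar_def
    by (rule_tac x = "\<lambda>u v. u = snd x \<and> v = snd y" in exI)
       (use assms in \<open>auto simp: pointed_model_def atom_agree_def\<close>)
qed (auto simp: bisimilar_def atom_agree_def)

lemma dB_pt_no_agents: "dB_pt Phi {} x y = (if modeq Phi {} x y then 0 else 1)"
  by (simp add: dB_pt_def pnbisim_no_agents_iff modeq_no_agents_iff)

lemma modeq_refl: "modeq Phi I x x"
  and modeq_sym: "modeq Phi I x y \<Longrightarrow> modeq Phi I y x"
  and modeq_trans: "modeq Phi I x y \<Longrightarrow> modeq Phi I y z \<Longrightarrow> modeq Phi I x z"
  unfolding modeq_def by auto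

lemma cls_eq_iff:
  assumes "x \<in> X" "y \<in> X"
  shows "cls Phi I X x = cls Phi I X y \<longleftrightarrow> modeq Phi I x y"
  using assms modeq_refl modeq_sym modeq_trans unfolding cls_def by blast

lemma modeq_some_in_cls:
  assumes "x \<in> X"
  shows "modeq Phi I x (SOME z. z \<in> cls Phi I X x)"
proof -
  have "x \<in> cls Phi I X x"
    using assms modeq_refl unfolding cls_def by simp
  then have "(SOME z. z \<in> cls Phi I X x) \<in> cls Phi I X x"
    by (rule someI)
  then show ?thesis
    unfolding cls_def by simp
qed

lemma dB_no_agents:
  assumes "c \<in> modal_space Phi {} X" "e \<in> modal_space Phi {} X"
  shows "dB Phi {} c e = (if c = e then 0 else 1)"
proof -
  obtain x y where xy: "x \<in> X" "y \<in> X" "c = cls Phi {} X x" "e = cls Phi {} X y"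
    using assms unfolding modal_space_def by auto
  have "modeq Phi {} (SOME z. z \<in> c) (SOME z. z \<in> e) \<longleftrightarrow> modeq Phi {} x y"
    using modeq_some_in_cls[of x X Phi "{}"] modeq_some_in_cls[of y X Phi "{}"] xy
      modeq_sym modeq_trans by metis
  then show ?thesis
    using cls_eq_iff[OF xy(1,2)] xy(3,4) by (simp add: dB_def dB_pt_no_agents)
qed

lemma metric_space_modal_space_no_agents: "Metric_space (modal_space Phi {} X) (dB Phi {})"
proof
  fix c e f
  show "0 \<le> dB Phi {} c e"
    by (simp add: dB_def dB_pt_no_agents)
  show "dB Phi {} c e = dB Phi {} e c"
    using modeq_sym by (metis dB_def dB_pt_no_agents)
  assume "c \<in> modal_space Phi {} X" "e \<in> modal_space Phi {} X"
  then show "(dB Phi {} c e = 0) = (c = e)"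
    by (simp add: dB_no_agents)
  assume "f \<in> modal_space Phi {} X"
  then show "dB Phi {} c f \<le> dB Phi {} c e + dB Phi {} e f"
    using \<open>c \<in> modal_space Phi {} X\<close> \<open>e \<in> modal_space Phi {} X\<close> by (simp add: dB_no_agents)
qed

lemma (in Metric_space) limitin_separated_imp_eventually_eq:
  assumes sep: "\<And>a b. a \<in> M \<Longrightarrow> b \<in> M \<Longrightarrow> a \<noteq> b \<Longrightarrow> \<delta> \<le> d a b"
    and "0 < \<delta>" and "limitin mtopology f l F"
  shows "eventually (\<lambda>n. f n = l) F"
proof -
  have "l \<in> M" and close: "eventually (\<lambda>n. f n \<in> M \<and> d (f n) l < \<delta>) F"
    using assms(2,3) limitin_metric by blast+
  from close show ?thesis
    by (rule eventually_mono) (use sep \<open>l \<in> M\<close> in fastforce)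
qed

lemma not_limitin_TB_no_agents:
  assumes "x \<in> X" "\<And>n. xs n \<in> X" "\<And>n. \<not> atom_agree Phi (xs n) x"
  shows "\<not> limitin (TB Phi {} X) (\<lambda>n. cls Phi {} X (xs n)) (cls Phi {} X x) sequentially"
proof
  interpret Metric_space "modal_space Phi {} X" "dB Phi {}"
    by (rule metric_space_modal_space_no_agents)
  assume "limitin (TB Phi {} X) (\<lambda>n. cls Phi {} X (xs n)) (cls Phi {} X x) sequentially"
  then have "eventually (\<lambda>n. cls Phi {} X (xs n) = cls Phi {} X x) sequentially"
    unfolding TB_def
    by (intro limitin_separated_imp_eventually_eq[of 1]) (simp_all add: dB_no_agents)
  then obtain n where "cls Phi {} X (xs n) = cls Phi {} X x"
    using eventually_sequentially by auto
  then show False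
    using assms cls_eq_iff modeq_no_agents_iff by metis
qed

lemma sat_eq_peval: "sat M s a = peval (sat M s) a"
  by (induction a) auto

lemma taut_imp_psat: "taut a \<Longrightarrow> psat x a"
  unfolding taut_def psat_def by (metis sat_eq_peval)

definition subst_valuation :: "(fm \<Rightarrow> bool) \<Rightarrow> (nat \<Rightarrow> fm) \<Rightarrow> fm \<Rightarrow> bool" where
  "subst_valuation v s f =
     (case f of Atom p \<Rightarrow> peval v (s p) | Box i b \<Rightarrow> v (Box i (subst s b)) | _ \<Rightarrow> False)"

lemma peval_subst: "peval v (subst s a) = peval (subst_valuation v s) a"
  by (induction a) (auto simp: subst_valuation_def)

lemma taut_subst: "taut a \<Longrightarrow> taut (subst s a)"
  by (simp add: taut_def peval_subst)

lemma subst_in_lang: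
  "a \<in> lang Phi I \<Longrightarrow> (\<forall>p \<in> Phi. s p \<in> lang Phi I) \<Longrightarrow> subst s a \<in> lang Phi I"
  by (induction a) (auto simp: lang_def)

lemma normal_logic_tautologies_no_agents: "normal_logic Phi {} {a \<in> lang Phi {}. taut a}"
  unfolding normal_logic_def
proof (intro conjI)
  show "\<forall>a b. a \<in> {a \<in> lang Phi {}. taut a} \<longrightarrow> imp a b \<in> {a \<in> lang Phi {}. taut a} \<longrightarrow>
      b \<in> {a \<in> lang Phi {}. taut a}"
    unfolding lang_def taut_def imp_def by auto
qed (auto intro: subst_in_lang taut_subst)

definition single_point :: "nat set \<Rightarrow> pointed" where
  "single_point V = (\<lparr>wrld = {0}, rel = (\<lambda>_ _ _. False), val = (\<lambda>p. if p \<in> V then {0} else {})\<rparr>, 0)"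

lemma pointed_model_single_point: "pointed_model (single_point V)"
  by (simp add: single_point_def pointed_model_def kripke_def)

lemma atom_agree_single_point: "atom_agree Phi (single_point V) (single_point W) \<longleftrightarrow> V \<inter> Phi = W \<inter> Phi"
  by (auto simp: single_point_def atom_agree_def)

lemma logically_converges_single_atom_points:
  "logically_converges Phi {} (\<lambda>n. single_point {n}) (single_point {})"
  unfolding logically_converges_def
proof (intro ballI impI)
  fix a assume a: "a \<in> lang Phi {}" "psat (single_point {}) a"
  obtain N where N: "\<forall>p \<in> atoms a. p < N"
    using finite_atoms finite_nat_set_iff_bounded by blast
  have "psat (single_point {n}) a" if "N \<le> n" for n
  proof -
    have "atom_agree (atoms a) (single_point {n}) (single_point {})"
      using N that by (auto simp: atom_agree_single_point)
    then show ?thesis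
      using a psat_eq_if_atom_agree by (auto simp: lang_def)
  qed
  then show "\<exists>N. \<forall>n\<ge>N. psat (single_point {n}) a"
    by blast
qed

theorem proposition1:
  shows "\<exists>(Phi :: nat set) (I :: nat set) (Lam :: fm set) (X :: pointed set) x xs.
    countable Phi \<and> finite I
  \<and> normal_logic Phi I Lam
  \<and> (\<forall>y \<in> X. pointed_model y \<and> (\<forall>a \<in> Lam. psat y a))
  \<and> (\<forall>y \<in> X. \<forall>z \<in> X. modeq Phi I y z \<longleftrightarrow> bisimilar Phi I y z)
  \<and> x \<in> X \<and> (\<forall>n. xs n \<in> X)
  \<and> logically_converges Phi I xs x
  \<and> \<not> limitin (TB Phi I X) (\<lambda>n. cls Phi I X (xs n)) (cls Phi I X x) sequentially"
proof -
  define X where "X = {y. pointed_model y}"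
  define x where "x = single_point {}"
  define xs where "xs = (\<lambda>n. single_point {n})"
  define Lam where "Lam = {a \<in> lang UNIV {}. taut a}"
  have in_X: "x \<in> X" "xs n \<in> X" for n
    by (simp_all add: X_def x_def xs_def pointed_model_single_point)
  have "\<not> limitin (TB UNIV {} X) (\<lambda>n. cls UNIV {} X (xs n)) (cls UNIV {} X x) sequentially"
    using in_X by (rule not_limitin_TB_no_agents) (simp add: xs_def x_def atom_agree_single_point)
  moreover have "\<forall>y \<in> X. \<forall>z \<in> X. modeq UNIV {} y z \<longleftrightarrow> bisimilar UNIV {} y z"
    by (simp add: X_def modeq_no_agents_iff bisimilar_no_agents_iff)
  moreover have "logically_converges UNIV {} xs x"
    unfolding xs_def x_def by (rule logically_converges_single_atom_points)
  moreover have "normal_logic UNIV {} Lam"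
    unfolding Lam_def by (rule normal_logic_tautologies_no_agents)
  moreover have "\<forall>y \<in> X. pointed_model y \<and> (\<forall>a \<in> Lam. psat y a)"
    by (simp add: X_def Lam_def taut_imp_psat)
  ultimately show ?thesis
    using in_X by (intro exI[where x = UNIV] exI[where x = "{}"] exI[where x = Lam]
        exI[where x = X] exI[where x = x] exI[where x = xs]) simp
qed

end
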